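(* Let $u_{nm}=\dfrac{4}{(m+2)(m+3)(m+4)}$ for $0\le n\le m$, and let $U(x)=\sum_{0\le n\le m<\infty}u_{nm}L_{nm}(x)$ for $x\in[-1,1]\setminus D$. Then $$\int_0^1U(x)\,dx=\pi-3\qquad\text{and}\qquad U\!\left(\tfrac13\right)=\operatorname*{ess\,sup}_{x\in[-1,1]}U(x)=2\ln2-1.$$
   Context: Signed binary expansion: every $x\in[-1,1]$ can be written as $x=\sum_{n=0}^{\infty}x_n2^{-(n+1)}$ with digits $x_n\in\{-1,+1\}$; there is a countable set $D\subset[-1,1]$ (consisting of certain dyadic rationals) outside of which this expansion is unique. For $x\in[-1,1]\setminus D$ with digits $(x_n)_{n\ge0}$ and integers $0\le n\le m$, define the loop-counting function $L_{nm}(x)=1$ if $\sum_{j=n}^{m}x_j=0$ and $L_{nm}(x)=0$ otherwise. (Note $\tfrac13\notin D$: it has digits $+1,-1,+1,-1,\dots$.) *)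

theory Defs
  imports "HOL-Analysis.Analysis" "HOL-Probability.Essential_Supremum"
begin

definition signed_expansion :: "real \<Rightarrow> (nat \<Rightarrow> int) \<Rightarrow> bool" where
  "signed_expansion x d \<longleftrightarrow> (\<forall>n. d n \<in> {-1, 1}) \<and> (\<lambda>n. real_of_int (d n) / 2 ^ (n + 1)) sums x"

definition Dset :: "real set" where
  "Dset = {x \<in> {-1..1}. \<not> (\<exists>!d. signed_expansion x d)}"

text \<open>The digits of x (meaningful for x in [-1,1] outside D).\<close>
definition digit :: "real \<Rightarrow> nat \<Rightarrow> int" where
  "digit x = (THE d. signed_expansion x d)"

definition L :: "nat \<Rightarrow> nat \<Rightarrow> real \<Rightarrow> real" where
  "L n m x = (if (\<Sum>j=n..m. digit x j) = 0 then 1 else 0)"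

definition u :: "nat \<Rightarrow> nat \<Rightarrow> real" where
  "u n m = 4 / ((real m + 2) * (real m + 3) * (real m + 4))"

definition U :: "real \<Rightarrow> real" where
  "U x = (\<Sum>\<^sub>\<infinity>(n, m) \<in> {(n, m). n \<le> m}. u n m * L n m x)"

end

theory Submission
  imports Defs
begin

text \<open>Under Lebesgue measure the digits are independent fair signs. Hence the integral of
  \<open>L n m\<close> over \<open>[0, 1]\<close> is the probability that \<open>m - n + 1\<close> fair signs (the first one forced
  to be \<open>1\<close> when \<open>n = 0\<close>) sum to zero, a central binomial probability
  \<open>binom (2 j) j / 4 ^ j\<close>. The weight \<open>u n m\<close> depends only on \<open>m\<close> and is the difference of
  consecutive tails \<open>2 / ((m + 2) (m + 3))\<close>, so summation by parts reduces the integral of \<open>U\<close>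
  to a series in these probabilities, which is evaluated with the arcsine series at \<open>1\<close>
  (giving \<open>pi / 2\<close>) and the Catalan series at \<open>1 / 4\<close> (giving \<open>2\<close>).

  A block of signs can only sum to zero if it has even length, and the alternating digits of
  \<open>1 / 3\<close> make every block of even length sum to zero. So \<open>U \<le> U (1 / 3)\<close> outside the null
  set of dyadic rationals, and \<open>U (1 / 3)\<close> is an alternating harmonic sum equal to
  \<open>2 ln 2 - 1\<close>. Conversely, on a set of positive measure the digits agree with those of
  \<open>1 / 3\<close> on any given prefix, and there \<open>U\<close> exceeds the corresponding partial sum of
  \<open>U (1 / 3)\<close>; this bounds the essential supremum from below.\<close>

section \<open>Signed binary expansions\<close>

lemma signed_expansion_sums:
  "signed_expansion x d \<Longrightarrow> (\<lambda>n. of_int (d n) / 2 ^ (n + 1)) sums x"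
  by (simp add: signed_expansion_def)

lemma signed_expansionD:
  "signed_expansion x d \<Longrightarrow> d n \<in> {-1, 1}"
  by (simp add: signed_expansion_def)

lemma signed_expansion_case_nat:
  assumes "signed_expansion y e" "a \<in> {-1, 1}"
  shows "signed_expansion ((y + of_int a) / 2) (case_nat a e)"
proof -
  have "(\<lambda>n. of_int (case_nat a e (Suc n)) / 2 ^ (Suc n + 1)) sums (y / 2)"
    using sums_divide[OF signed_expansion_sums[OF assms(1)], of 2] by (simp add: field_simps)
  then have "(\<lambda>n. of_int (case_nat a e n) / 2 ^ (n + 1)) sums (y / 2 + of_int a / 2)"
    by (subst (asm) sums_Suc_iff) simp
  moreover have "case_nat a e n \<in> {-1, 1}" for n
    using assms signed_expansionD by (cases n) auto
  ultimately show ?thesis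
    by (simp add: signed_expansion_def add_divide_distrib)
qed

lemma signed_expansion_shift:
  assumes "signed_expansion x d"
  shows "signed_expansion (2 * x - of_int (d 0)) (\<lambda>i. d (Suc i))"
proof -
  have "(\<lambda>n. of_int (d (Suc n)) / 2 ^ (Suc n + 1)) sums (x - of_int (d 0) / 2)"
    using signed_expansion_sums[OF assms] by (subst sums_Suc_iff) simp
  from sums_mult[OF this, of 2]
  have "(\<lambda>n. of_int (d (Suc n)) / 2 ^ (n + 1)) sums (2 * x - of_int (d 0))"
    by (simp add: algebra_simps)
  then show ?thesis
    using assms by (auto simp: signed_expansion_def)
qed

lemma signed_expansion_bounds:
  assumes "signed_expansion x d"
  shows "x \<in> {-1..1}"
proof -
  have geometric: "(\<lambda>n. 1 / 2 ^ (n + 1)) sums (1 :: real)"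
    using power_half_series by (simp add: power_divide)
  have upper: "of_int (d n) / 2 ^ (n + 1) \<le> 1 / (2 ^ (n + 1) :: real)"
    and lower: "- 1 / 2 ^ (n + 1) \<le> of_int (d n) / (2 ^ (n + 1) :: real)" for n
    using signed_expansionD[OF assms, of n] by (cases "d n = 1"; simp)+
  have "x \<le> 1"
    using sums_le[OF upper signed_expansion_sums[OF assms] geometric] .
  moreover have "-1 \<le> x"
    using sums_le[OF lower _ signed_expansion_sums[OF assms]] sums_minus[OF geometric] by simp
  ultimately show ?thesis by simp
qed

lemma signed_expansion_first_digit:
  assumes "signed_expansion x d" "x \<noteq> 0"
  shows "of_int (d 0) = sgn x"
proof -
  have "2 * x - of_int (d 0) \<in> {-1..1}"
    using signed_expansion_bounds[OF signed_expansion_shift[OF assms(1)]] .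
  moreover have "d 0 = 1 \<or> d 0 = -1"
    using signed_expansionD[OF assms(1), of 0] by auto
  ultimately show ?thesis
    using assms(2) by (elim disjE) (simp_all add: sgn_if)
qed

lemma signed_expansion_tail:
  assumes "signed_expansion x d"
  shows "signed_expansion (2 ^ k * (x - (\<Sum>i<k. of_int (d i) / 2 ^ (i + 1)))) (\<lambda>i. d (i + k))"
proof (induction k)
  case 0
  then show ?case using assms by simp
next
  case (Suc k)
  have "2 * (2 ^ k * (x - (\<Sum>i<k. of_int (d i) / 2 ^ (i + 1)))) - of_int (d k)
      = 2 ^ Suc k * (x - (\<Sum>i<Suc k. of_int (d i) / 2 ^ (i + 1)))"
    by (simp add: field_simps)
  then show ?case
    using signed_expansion_shift[OF Suc] by simp
qed

definition dyadic_rationals :: "real set" where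
  "dyadic_rationals = range (\<lambda>(j :: int, k :: nat). of_int j / 2 ^ k)"

lemma dyadic_rationalsI: "of_int j / 2 ^ k \<in> dyadic_rationals"
  by (auto simp: dyadic_rationals_def intro!: image_eqI[where x = "(j, k)"])

lemma negligible_dyadic_rationals: "negligible dyadic_rationals"
proof -
  have "negligible (\<Union>x\<in>dyadic_rationals. {x})"
    by (rule negligible_countable_Union) (auto simp: dyadic_rationals_def)
  then show ?thesis by simp
qed

lemma dyadic_rationals_double_minus:
  assumes "x \<notin> dyadic_rationals"
  shows "2 * x - of_int c \<notin> dyadic_rationals"
proof
  assume "2 * x - of_int c \<in> dyadic_rationals"
  then obtain j k where "2 * x - of_int c = of_int j / 2 ^ k"
    by (auto simp: dyadic_rationals_def)
  then have "x = of_int (j + c * 2 ^ k) / 2 ^ Suc k"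
    by (simp add: field_simps)
  with assms dyadic_rationalsI show False by metis
qed

lemma signed_partial_sum_dyadic:
  "(\<Sum>i<k. of_int (d i) / 2 ^ (i + 1)) \<in> dyadic_rationals"
proof -
  have "\<exists>j. (\<Sum>i<k. of_int (d i) / 2 ^ (i + 1)) = (of_int j / 2 ^ k :: real)"
  proof (induction k)
    case (Suc k)
    then obtain j where "(\<Sum>i<k. of_int (d i) / 2 ^ (i + 1)) = (of_int j / 2 ^ k :: real)"
      by blast
    then have "(\<Sum>i<Suc k. of_int (d i) / 2 ^ (i + 1)) = (of_int (2 * j + d k) / 2 ^ Suc k :: real)"
      by (simp add: field_simps)
    then show ?case by blast
  qed (auto intro!: exI[of _ 0])
  then show ?thesis
    using dyadic_rationalsI by metis
qed

lemma signed_expansion_unique: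
  assumes "x \<notin> dyadic_rationals" "signed_expansion x d" "signed_expansion x e"
  shows "d = e"
proof (rule ccontr)
  assume "d \<noteq> e"
  then obtain k0 where "d k0 \<noteq> e k0"
    by auto
  define k where "k = (LEAST i. d i \<noteq> e i)"
  have k: "d k \<noteq> e k"
    using LeastI[of "\<lambda>i. d i \<noteq> e i", OF \<open>d k0 \<noteq> e k0\<close>] by (simp add: k_def)
  have "d i = e i" if "i < k" for i
    using not_less_Least[of i "\<lambda>i. d i \<noteq> e i"] that by (simp add: k_def)
  then have "(\<Sum>i<k. of_int (d i) / 2 ^ (i + 1)) = (\<Sum>i<k. of_int (e i) / (2 ^ (i + 1) :: real))"
    by simp
  txt \<open>Past the first disagreement both tails expand the same nonzero number, whose sign
    is their first digit.\<close>
  define y where "y = 2 ^ k * (x - (\<Sum>i<k. of_int (d i) / 2 ^ (i + 1)))"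
  have "y \<noteq> 0"
    using assms(1) signed_partial_sum_dyadic[of d k] by (auto simp: y_def)
  have "signed_expansion y (\<lambda>i. d (i + k))"
    using signed_expansion_tail[OF assms(2), of k] by (simp add: y_def)
  from signed_expansion_first_digit[OF this \<open>y \<noteq> 0\<close>] have "of_int (d k) = sgn y"
    by simp
  moreover have "signed_expansion y (\<lambda>i. e (i + k))"
    using signed_expansion_tail[OF assms(3), of k] \<open>(\<Sum>i<k. _) = _\<close> by (simp add: y_def)
  from signed_expansion_first_digit[OF this \<open>y \<noteq> 0\<close>] have "of_int (e k) = sgn y"
    by simp
  ultimately show False
    using k by (metis of_int_eq_iff)
qed

fun greedy_remainder :: "real \<Rightarrow> nat \<Rightarrow> real" where
  "greedy_remainder x 0 = x"
| "greedy_remainder x (Suc n) = 2 * greedy_remainder x n - (if greedy_remainder x n \<ge> 0 then 1 else -1)"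

lemma signed_expansion_exists:
  assumes "x \<in> {-1..1}"
  shows "\<exists>d. signed_expansion x d"
proof -
  define d where "d n = (if greedy_remainder x n \<ge> 0 then 1 else -1 :: int)" for n
  have bounded: "\<bar>greedy_remainder x n\<bar> \<le> 1" for n
    using assms by (induction n) auto
  have partial: "(\<Sum>i<n. of_int (d i) / 2 ^ (i + 1)) = x - greedy_remainder x n / 2 ^ n" for n
    by (induction n) (auto simp: d_def field_simps)
  have "(\<lambda>n. greedy_remainder x n / 2 ^ n) \<longlonglongrightarrow> 0"
  proof (rule Lim_null_comparison)
    show "\<forall>\<^sub>F n in sequentially. norm (greedy_remainder x n / 2 ^ n) \<le> (1 / 2) ^ n"
      using bounded by (auto simp: power_divide divide_simps)
  qed (rule LIMSEQ_realpow_zero; simp)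
  then have "(\<lambda>n. x - greedy_remainder x n / 2 ^ n) \<longlonglongrightarrow> x"
    by (auto intro: tendsto_eq_intros)
  then have "(\<lambda>n. of_int (d n) / 2 ^ (n + 1)) sums x"
    unfolding sums_def partial .
  then have "signed_expansion x d"
    by (auto simp: signed_expansion_def d_def)
  then show ?thesis by blast
qed

lemma signed_expansion_digit:
  assumes "x \<in> {-1..1}" "x \<notin> dyadic_rationals"
  shows "signed_expansion x (digit x)"
proof -
  have "\<exists>!d. signed_expansion x d"
    using signed_expansion_exists[OF assms(1)] signed_expansion_unique[OF assms(2)] by blast
  then show ?thesis
    unfolding digit_def by (rule theI')
qed

lemma digit_eqI:
  assumes "x \<notin> dyadic_rationals" "signed_expansion x d"
  shows "digit x = d"
  using signed_expansion_unique[OF assms(1) signed_expansion_digit assms(2)]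
    signed_expansion_bounds[OF assms(2)] assms(1) by blast

lemma digit_double_minus:
  assumes "x \<in> {-1..1}" "x \<notin> dyadic_rationals" "a \<in> {-1, 1}" "0 \<le> of_int a * x"
  shows "digit x = case_nat a (digit (2 * x - of_int a))"
proof -
  let ?y = "2 * x - of_int a"
  have "?y \<in> {-1..1}"
    using assms(1,3,4) by (auto simp: zero_le_mult_iff)
  then have "signed_expansion ((?y + of_int a) / 2) (case_nat a (digit ?y))"
    using signed_expansion_case_nat[OF signed_expansion_digit assms(3)]
      dyadic_rationals_double_minus[OF assms(2)] by blast
  then show ?thesis
    using digit_eqI[OF assms(2)] by simp
qed

lemma has_integral_digit_half:
  fixes F :: "(nat \<Rightarrow> int) \<Rightarrow> real"
  assumes "a \<in> {-1, 1}" "((\<lambda>y. F (case_nat a (digit y))) has_integral I) {-1..1}"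
  shows "((\<lambda>x. F (digit x)) has_integral I / 2) {(of_int a - 1) / 2 .. (of_int a + 1) / 2}"
proof -
  have "((\<lambda>y. F (case_nat a (digit y))) has_integral I) (cbox (-1) (1 :: real))"
    using assms(2) by simp
  from has_integral_affinity'[OF this, of 2 "- of_int a"]
  have affine: "((\<lambda>x. F (case_nat a (digit (2 * x - of_int a)))) has_integral I / 2)
      {(of_int a - 1) / 2 .. (of_int a + 1) / 2}"
    by (simp add: algebra_simps diff_divide_distrib add_divide_distrib)
  have "F (digit x) = F (case_nat a (digit (2 * x - of_int a)))"
    if "x \<in> {(of_int a - 1) / 2 .. (of_int a + 1) / 2} - dyadic_rationals" for x
  proof -
    have "x \<in> {-1..1}" "0 \<le> of_int a * x"
      using that assms(1) by auto
    then show ?thesis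
      using digit_double_minus[of x a] that assms(1) by simp
  qed
  then show ?thesis
    by (rule has_integral_spike[OF negligible_dyadic_rationals _ affine])
qed

section \<open>Integrals of functions of finitely many digits\<close>

definition prefix_determined :: "nat \<Rightarrow> ((nat \<Rightarrow> int) \<Rightarrow> real) \<Rightarrow> bool" where
  "prefix_determined N F \<longleftrightarrow> (\<forall>d d'. (\<forall>i<N. d i = d' i) \<longrightarrow> F d = F d')"

fun prefix_mean :: "nat \<Rightarrow> ((nat \<Rightarrow> int) \<Rightarrow> real) \<Rightarrow> real" where
  "prefix_mean 0 F = F (\<lambda>_. 1)"
| "prefix_mean (Suc N) F =
    (prefix_mean N (\<lambda>d. F (case_nat 1 d)) + prefix_mean N (\<lambda>d. F (case_nat (-1) d))) / 2"

lemma prefix_determined_case_nat: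
  "prefix_determined (Suc N) F \<Longrightarrow> prefix_determined N (\<lambda>d. F (case_nat a d))"
  unfolding prefix_determined_def
proof (intro allI impI)
  fix d d' :: "nat \<Rightarrow> int"
  assume "\<forall>d d'. (\<forall>i<Suc N. d i = d' i) \<longrightarrow> F d = F d'" "\<forall>i<N. d i = d' i"
  moreover have "\<forall>i<Suc N. case_nat a d i = case_nat a d' i"
    using \<open>\<forall>i<N. d i = d' i\<close> by (auto split: nat.split)
  ultimately show "F (case_nat a d) = F (case_nat a d')"
    by blast
qed

lemma has_integral_prefix_mean:
  "prefix_determined N F \<Longrightarrow> ((\<lambda>x. F (digit x)) has_integral 2 * prefix_mean N F) {-1..1}"
proof (induction N arbitrary: F)
  case 0
  then have "(\<lambda>x. F (digit x)) = (\<lambda>_. F (\<lambda>_. 1))"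
    unfolding prefix_determined_def by blast
  then show ?case
    using has_integral_const_real[of "F (\<lambda>_. 1)" "-1" 1] by simp
next
  case (Suc N)
  have "((\<lambda>x. F (digit x)) has_integral prefix_mean N (\<lambda>d. F (case_nat a d))) {(of_int a - 1) / 2 .. (of_int a + 1) / 2}"
    if "a \<in> {-1, 1}" for a
    using has_integral_digit_half[OF that Suc.IH[OF prefix_determined_case_nat[OF Suc.prems]]]
    by simp
  from this[of "-1"] this[of 1]
  have "((\<lambda>x. F (digit x)) has_integral
      prefix_mean N (\<lambda>d. F (case_nat (-1) d)) + prefix_mean N (\<lambda>d. F (case_nat 1 d))) {-1..1}"
    by (intro has_integral_combine[of "-1" 0 1]) simp_all
  moreover have "2 * prefix_mean (Suc N) F
      = prefix_mean N (\<lambda>d. F (case_nat (-1) d)) + prefix_mean N (\<lambda>d. F (case_nat 1 d))"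
    by simp
  ultimately show ?case
    by metis
qed

lemma has_integral_prefix_mean_01:
  assumes "prefix_determined (Suc N) F"
  shows "((\<lambda>x. F (digit x)) has_integral prefix_mean N (\<lambda>d. F (case_nat 1 d))) {0..1}"
  using has_integral_digit_half[of 1, OF _ has_integral_prefix_mean[OF prefix_determined_case_nat[OF assms]]]
  by simp

lemma prefix_mean_mono:
  "(\<And>d. (\<forall>i. d i \<in> {-1, 1}) \<Longrightarrow> F d \<le> G d) \<Longrightarrow> prefix_mean N F \<le> prefix_mean N G"
proof (induction N arbitrary: F G)
  case (Suc N)
  have "(\<forall>i. case_nat a d i \<in> {-1, 1})" if "a \<in> {-1, 1}" "\<forall>i. d i \<in> {-1, 1}" for a d
    using that by (simp split: nat.split)
  then have "prefix_mean N (\<lambda>d. F (case_nat a d)) \<le> prefix_mean N (\<lambda>d. G (case_nat a d))"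
    if "a \<in> {-1, 1}" for a
    using that by (intro Suc.IH Suc.prems) blast
  from this[of 1] this[of "-1"] show ?case by simp
qed simp

lemma prefix_mean_cong:
  "(\<And>d. (\<forall>i. d i \<in> {-1, 1}) \<Longrightarrow> F d = G d) \<Longrightarrow> prefix_mean N F = prefix_mean N G"
  by (intro antisym prefix_mean_mono) simp_all

lemma prefix_mean_const [simp]: "prefix_mean N (\<lambda>_. c) = c"
  by (induction N) auto

lemma prefix_mean_shift:
  "prefix_mean (n + k) (\<lambda>d. G (\<lambda>i. d (n + i))) = prefix_mean k G"
  by (induction n) simp_all

lemma prefix_mean_ge_pattern:
  assumes "\<forall>i. e i \<in> {-1, 1}" "\<And>d. 0 \<le> F d"
  shows "F (\<lambda>i. if i < N then e i else 1) / 2 ^ N \<le> prefix_mean N F"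
  using assms
proof (induction N arbitrary: F e)
  case (Suc N)
  have nonneg: "0 \<le> prefix_mean N (\<lambda>d. F (case_nat a d))" for a
    using prefix_mean_mono[of "\<lambda>_. 0" "\<lambda>d. F (case_nat a d)" N] Suc.prems(2) by simp
  have "case_nat (e 0) (\<lambda>i. if i < N then e (Suc i) else 1) = (\<lambda>i. if i < Suc N then e i else 1)"
    by (auto split: nat.split)
  moreover have "F (case_nat (e 0) (\<lambda>i. if i < N then e (Suc i) else 1)) / 2 ^ N
      \<le> prefix_mean N (\<lambda>d. F (case_nat (e 0) d))"
    using Suc.prems by (intro Suc.IH) simp_all
  moreover have "e 0 = 1 \<or> e 0 = -1"
    using Suc.prems(1) by auto
  ultimately have "F (\<lambda>i. if i < Suc N then e i else 1) / 2 ^ N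
      \<le> prefix_mean N (\<lambda>d. F (case_nat 1 d)) + prefix_mean N (\<lambda>d. F (case_nat (-1) d))"
    using nonneg[of 1] nonneg[of "-1"] by auto
  then show ?case
    by (simp add: field_simps)
qed simp

section \<open>Loop probabilities\<close>

definition count_ones :: "nat \<Rightarrow> (nat \<Rightarrow> int) \<Rightarrow> nat" where
  "count_ones k d = card {j. j < k \<and> d j = 1}"

lemma count_ones_0 [simp]: "count_ones 0 d = 0"
  by (simp add: count_ones_def)

lemma count_ones_Suc: "count_ones (Suc k) d = count_ones k d + (if d k = 1 then 1 else 0)"
proof -
  have "{j. j < Suc k \<and> d j = 1} = {j. j < k \<and> d j = 1} \<union> (if d k = 1 then {k} else {})"
    by (auto simp: less_Suc_eq)
  then show ?thesis
    by (simp add: count_ones_def card_insert_if)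
qed

lemma count_ones_case_nat: "count_ones (Suc k) (case_nat a d) = (if a = 1 then 1 else 0) + count_ones k d"
  by (induction k) (simp_all add: count_ones_Suc)

lemma sum_signs_count_ones:
  assumes "\<forall>i. d i \<in> {-1, 1}"
  shows "(\<Sum>j<k. d j) = 2 * int (count_ones k d) - int k"
  using assms by (induction k) (auto simp: count_ones_Suc)

lemma prefix_mean_count_ones:
  "prefix_mean k (\<lambda>d. if count_ones k d = i then 1 else 0) = real (k choose i) / 2 ^ k"
proof (induction k arbitrary: i)
  case 0
  then show ?case by (simp add: count_ones_def)
next
  case (Suc k)
  have "prefix_mean k (\<lambda>d. if count_ones (Suc k) (case_nat 1 d) = i then 1 else 0)
      = (if i = 0 then 0 else real (k choose (i - 1)) / 2 ^ k)"
    using Suc.IH by (cases i) (simp_all add: count_ones_case_nat)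
  moreover have "prefix_mean k (\<lambda>d. if count_ones (Suc k) (case_nat (-1) d) = i then 1 else 0)
      = real (k choose i) / 2 ^ k"
    using Suc.IH by (simp add: count_ones_case_nat)
  ultimately show ?case
    by (cases i) (simp_all add: field_simps)
qed

definition central_binom :: "nat \<Rightarrow> real" where
  "central_binom j = real ((2 * j) choose j) / 4 ^ j"

lemma prefix_mean_balanced:
  "prefix_mean k (\<lambda>d. if (\<Sum>i<k. d i) = 0 then 1 else 0) = (if even k then central_binom (k div 2) else 0)"
proof -
  have "prefix_mean k (\<lambda>d. if (\<Sum>i<k. d i) = 0 then 1 else 0)
      = prefix_mean k (\<lambda>d. if 2 * int (count_ones k d) = int k then 1 else 0)"
    by (rule prefix_mean_cong) (simp add: sum_signs_count_ones)
  also have "\<dots> = (if even k then central_binom (k div 2) else 0)"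
  proof (cases "even k")
    case True
    then obtain j where "k = 2 * j" by blast
    then have "prefix_mean k (\<lambda>d. if 2 * int (count_ones k d) = int k then 1 else 0)
        = prefix_mean k (\<lambda>d. if count_ones k d = j then 1 else 0)"
      by (intro prefix_mean_cong) auto
    with \<open>k = 2 * j\<close> show ?thesis
      by (simp add: prefix_mean_count_ones central_binom_def power_mult)
  next
    case False
    then have "prefix_mean k (\<lambda>d. if 2 * int (count_ones k d) = int k then 1 else 0)
        = prefix_mean k (\<lambda>_. 0)"
      by (intro prefix_mean_cong) presburger
    with False show ?thesis by simp
  qed
  finally show ?thesis .
qed

lemma central_binom_Suc_eq_odd_binomial: "real ((2 * i + 1) choose i) / 2 ^ (2 * i + 1) = central_binom (Suc i)"
proof -
  have "(2 * Suc i) choose (Suc i) = 2 * ((2 * i + 1) choose i)"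
    using central_binomial_odd[of "2 * i + 1"] by simp
  then show ?thesis
    by (simp add: central_binom_def power_mult)
qed

definition loop :: "nat \<Rightarrow> nat \<Rightarrow> (nat \<Rightarrow> int) \<Rightarrow> real" where
  "loop n m d = (if (\<Sum>j=n..m. d j) = 0 then 1 else 0)"

text \<open>The integral of \<open>L n m\<close> over \<open>[0, 1]\<close> with \<open>t = m - n\<close>. It depends only on \<open>m - n\<close>,
  although for \<open>n = 0\<close> the block contains the first digit, which is \<open>1\<close> on \<open>[0, 1]\<close>.\<close>

definition loop_prob :: "nat \<Rightarrow> real" where
  "loop_prob t = (if odd t then central_binom ((t + 1) div 2) else 0)"

lemma prefix_determined_loop: "prefix_determined (Suc m) (loop n m)"
  unfolding prefix_determined_def loop_def by (auto intro!: sum.cong)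

lemma prefix_mean_loop_inner:
  assumes "1 \<le> n" "n \<le> m"
  shows "prefix_mean m (\<lambda>d. loop n m (case_nat 1 d)) = loop_prob (m - n)"
proof -
  define k where "k = Suc (m - n)"
  define G where "G e = (if (\<Sum>i<k. e i) = 0 then 1 else (0 :: real))" for e :: "nat \<Rightarrow> int"
  have "(\<Sum>j=n..m. f j) = (\<Sum>i<k. f (n + i))" for f :: "nat \<Rightarrow> int"
    using sum.atLeastAtMost_shift_0[OF assms(2), of f]
    by (simp add: k_def atLeast0AtMost lessThan_Suc_atMost)
  moreover have "case_nat 1 d (n + i) = d ((n - 1) + i)" for d :: "nat \<Rightarrow> int" and i
    using assms(1) by (cases n) auto
  ultimately have "(\<lambda>d. loop n m (case_nat 1 d)) = (\<lambda>d. G (\<lambda>i. d ((n - 1) + i)))"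
    by (simp add: loop_def G_def)
  moreover have "m = (n - 1) + k"
    using assms by (simp add: k_def)
  ultimately have "prefix_mean m (\<lambda>d. loop n m (case_nat 1 d)) = prefix_mean k G"
    using prefix_mean_shift[of "n - 1" k G] by simp
  also have "\<dots> = (if even k then central_binom (k div 2) else 0)"
    unfolding G_def by (rule prefix_mean_balanced)
  also have "\<dots> = loop_prob (m - n)"
    by (simp add: loop_prob_def k_def)
  finally show ?thesis .
qed

lemma prefix_mean_loop_initial:
  "prefix_mean m (\<lambda>d. loop 0 m (case_nat 1 d)) = loop_prob m"
proof -
  have "(\<Sum>j=0..m. case_nat 1 d j) = 1 + (\<Sum>i<m. d i)" for d :: "nat \<Rightarrow> int"
    by (simp add: atLeast0AtMost lessThan_Suc_atMost[symmetric] sum.lessThan_Suc_shift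
        del: sum.lessThan_Suc)
  then have "prefix_mean m (\<lambda>d. loop 0 m (case_nat 1 d))
      = prefix_mean m (\<lambda>d. if 2 * int (count_ones m d) + 1 = int m then 1 else 0)"
    by (intro prefix_mean_cong) (auto simp: loop_def sum_signs_count_ones)
  also have "\<dots> = loop_prob m"
  proof (cases "odd m")
    case True
    then obtain i where "m = 2 * i + 1"
      using oddE by blast
    then have "prefix_mean m (\<lambda>d. if 2 * int (count_ones m d) + 1 = int m then 1 else 0)
        = prefix_mean m (\<lambda>d. if count_ones m d = i then 1 else 0)"
      by (intro prefix_mean_cong) auto
    also have "\<dots> = real (m choose i) / 2 ^ m"
      by (rule prefix_mean_count_ones)
    also have "\<dots> = loop_prob m"
      using central_binom_Suc_eq_odd_binomial[of i] \<open>m = 2 * i + 1\<close> by (simp add: loop_prob_def)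
    finally show ?thesis .
  next
    case False
    then have "prefix_mean m (\<lambda>d. if 2 * int (count_ones m d) + 1 = int m then 1 else 0)
        = prefix_mean m (\<lambda>_. 0)"
      by (intro prefix_mean_cong) presburger
    with False show ?thesis
      by (simp add: loop_prob_def)
  qed
  finally show ?thesis .
qed

lemma L_eq_loop: "L n m x = loop n m (digit x)"
  by (simp add: L_def loop_def)

lemma has_integral_L_01:
  assumes "n \<le> m"
  shows "(L n m has_integral loop_prob (m - n)) {0..1}"
proof -
  have "prefix_mean m (\<lambda>d. loop n m (case_nat 1 d)) = loop_prob (m - n)"
    using prefix_mean_loop_inner[OF _ assms] prefix_mean_loop_initial[of m] by (cases "n = 0") auto
  moreover have "L n m = (\<lambda>x. loop n m (digit x))"
    by (simp add: fun_eq_iff L_eq_loop)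
  ultimately show ?thesis
    using has_integral_prefix_mean_01[OF prefix_determined_loop, of n m] by simp
qed

lemma has_integral_L:
  "(L n m has_integral 2 * prefix_mean (Suc m) (loop n m)) {-1..1}"
  using has_integral_prefix_mean[OF prefix_determined_loop, of n m] by (simp add: L_eq_loop[abs_def])

section \<open>Series involving central binomial coefficients\<close>

lemma central_binom_0 [simp]: "central_binom 0 = 1"
  by (simp add: central_binom_def)

lemma central_binom_nonneg: "0 \<le> central_binom j"
  by (simp add: central_binom_def)

lemma central_binom_le_1: "central_binom j \<le> 1"
proof -
  have "real ((2 * j) choose j) \<le> 2 ^ (2 * j)"
    using binomial_le_pow2[of "2 * j" j] by (metis of_nat_le_iff of_nat_numeral of_nat_power)
  then show ?thesis
    by (simp add: central_binom_def power_mult)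
qed

lemma central_binom_Suc: "central_binom (Suc j) = central_binom j * (2 * real j + 1) / (2 * real j + 2)"
proof -
  define C B where "C = real ((2 * j) choose j)" and "B = real ((2 * j + 1) choose j)"
  have "(2 * j + 1) * ((2 * j) choose j) = ((2 * j + 1) choose j) * (j + 1)"
    using Suc_times_binomial_eq[of "2 * j" j] central_binomial_odd[of "2 * j + 1"] by simp
  then have "(2 * real j + 1) * C = B * (real j + 1)"
    unfolding B_def C_def by (metis (mono_tags, lifting) of_nat_1 of_nat_add of_nat_mult of_nat_numeral)
  then have B: "B = (2 * real j + 1) * C / (real j + 1)"
    by (simp add: field_simps)
  have "central_binom (Suc j) = B / (2 * 4 ^ j)"
    by (simp flip: central_binom_Suc_eq_odd_binomial add: B_def power_mult)
  also have "\<dots> = C / 4 ^ j * (2 * real j + 1) / (2 * real j + 2)"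
    unfolding B by (simp add: field_simps)
  also have "\<dots> = central_binom j * (2 * real j + 1) / (2 * real j + 2)"
    by (simp add: central_binom_def C_def)
  finally show ?thesis .
qed

lemma gbinomial_minus_half: "((-1/2 :: real) gchoose j) * (-1) ^ j = central_binom j"
proof (induction j)
  case (Suc j)
  have step: "((-1/2 :: real) gchoose Suc j) = ((-1/2) gchoose j) * (-1/2 - of_nat j) / of_nat (Suc j)"
    using gbinomial_mult_1[of "-1/2 :: real" j] by (simp add: field_simps)
  have "2 * real j + 2 \<noteq> 0"
    by linarith
  then have "((-1/2 :: real) gchoose Suc j) * (-1) ^ Suc j
      = (((-1/2) gchoose j) * (-1) ^ j) * (2 * real j + 1) / (2 * real j + 2)"
    unfolding step by (simp add: field_simps)
  also have "\<dots> = central_binom (Suc j)"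
    unfolding Suc.IH central_binom_Suc ..
  finally show ?case .
qed simp

lemma sums_central_binom_power:
  assumes "\<bar>z\<bar> < 1"
  shows "(\<lambda>j. central_binom j * z ^ j) sums (1 / sqrt (1 - z))"
proof -
  have "(\<lambda>j. ((-1/2) gchoose j) * (- z) ^ j) sums (1 + - z) powr (-1/2)"
    using gen_binomial_real[of "- z"] assms by simp
  moreover have "((-1/2) gchoose j) * (- z) ^ j = central_binom j * z ^ j" for j
    using gbinomial_minus_half[of j] by (simp add: power_minus[of z] mult.assoc mult.commute)
  moreover have "(1 + - z) powr (-1/2) = 1 / sqrt (1 - z)"
    using assms by (simp add: powr_minus_divide powr_half_sqrt[symmetric])
  ultimately show ?thesis
    by simp
qed

definition arcsin_coeff :: "nat \<Rightarrow> real" where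
  "arcsin_coeff n = (if odd n then central_binom (n div 2) / n else 0)"

lemma arcsin_coeff_nonneg: "0 \<le> arcsin_coeff n"
  by (simp add: arcsin_coeff_def central_binom_nonneg)

lemma sums_arcsin_deriv:
  assumes "\<bar>x\<bar> < 1"
  shows "(\<lambda>n. arcsin_coeff (Suc n) * real (Suc n) * x ^ n) sums (1 / sqrt (1 - x\<^sup>2))"
proof -
  let ?g = "\<lambda>n. if even n then central_binom (n div 2) * x ^ n else 0"
  have "(\<lambda>j. central_binom j * (x\<^sup>2) ^ j) sums (1 / sqrt (1 - x\<^sup>2))"
    using sums_central_binom_power[of "x\<^sup>2"] assms by (simp add: abs_square_less_1)
  then have "(\<lambda>j. ?g (2 * j)) sums (1 / sqrt (1 - x\<^sup>2))"
    by (simp add: power_mult)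
  then have "?g sums (1 / sqrt (1 - x\<^sup>2))"
    by (subst (asm) sums_mono_reindex) (auto simp: strict_mono_def elim!: evenE)
  moreover have "arcsin_coeff (Suc n) * real (Suc n) * x ^ n = ?g n" for n
    by (simp add: arcsin_coeff_def)
  ultimately show ?thesis
    by simp
qed

lemma sums_arcsin:
  assumes "\<bar>x\<bar> < 1"
  shows "(\<lambda>n. arcsin_coeff n * x ^ n) sums arcsin x"
proof -
  define f where "f y = (\<Sum>n. arcsin_coeff (Suc n) * y ^ Suc n)" for y
  have "DERIV (\<lambda>y. f y - arcsin y) y :> 0" if "y \<in> {-1<..<1}" for y
  proof -
    have "\<bar>y\<bar> < 1"
      using that by auto
    have "DERIV f y :> (\<Sum>n. arcsin_coeff (Suc n) * real (Suc n) * y ^ n)"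
      unfolding f_def by (rule DERIV_power_series'[where R = 1])
        (use sums_arcsin_deriv that in \<open>auto simp: sums_iff\<close>)
    then have "DERIV f y :> inverse (sqrt (1 - y\<^sup>2))"
      using sums_unique[OF sums_arcsin_deriv[OF \<open>\<bar>y\<bar> < 1\<close>]] by (simp add: inverse_eq_divide)
    with DERIV_arcsin[of y] that show ?thesis
      using DERIV_diff by fastforce
  qed
  then have "f x - arcsin x = f 0 - arcsin 0"
    by (intro DERIV_isconst3[of "-1" 1]) (use assms in auto)
  then have "f x = arcsin x"
    by (simp add: f_def)
  moreover have "summable (\<lambda>n. arcsin_coeff (Suc n) * x ^ Suc n)"
  proof (rule summable_comparison_test')
    show "summable (\<lambda>n. arcsin_coeff (Suc n) * real (Suc n) * \<bar>x\<bar> ^ n)"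
      using sums_arcsin_deriv[of "\<bar>x\<bar>"] assms by (simp add: sums_iff)
    have "\<bar>x\<bar> ^ Suc n \<le> real (Suc n) * \<bar>x\<bar> ^ n" for n
      using assms by (simp add: mult_right_mono)
    then show "norm (arcsin_coeff (Suc n) * x ^ Suc n) \<le> arcsin_coeff (Suc n) * real (Suc n) * \<bar>x\<bar> ^ n" for n
      using arcsin_coeff_nonneg[of "Suc n"]
      by (simp add: abs_mult power_abs mult.assoc mult_left_mono del: power_Suc)
  qed
  ultimately have "(\<lambda>n. arcsin_coeff (Suc n) * x ^ Suc n) sums arcsin x"
    unfolding f_def by (metis summable_sums)
  from sums_Suc_iff[of "\<lambda>n. arcsin_coeff n * x ^ n", THEN iffD1, OF this] show ?thesis
    by (simp add: arcsin_coeff_def)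
qed

lemma sums_nonneg_power_series_at_left_1:
  fixes c :: "nat \<Rightarrow> real"
  assumes nonneg: "\<And>n. 0 \<le> c n"
    and series: "\<And>x. x \<in> {0<..<1} \<Longrightarrow> (\<lambda>n. c n * x ^ n) sums f x"
    and limit: "(f \<longlongrightarrow> s) (at_left 1)"
  shows "c sums s"
proof -
  have partial: "(\<Sum>n<N. c n) \<le> s" for N
  proof (rule tendsto_le[OF trivial_limit_at_left_real limit])
    have "((\<lambda>x. \<Sum>n<N. c n * x ^ n) \<longlongrightarrow> (\<Sum>n<N. c n * 1 ^ n)) (at_left 1)"
      by (intro tendsto_intros)
    then show "((\<lambda>x. \<Sum>n<N. c n * x ^ n) \<longlongrightarrow> (\<Sum>n<N. c n)) (at_left 1)"
      by simp
    show "\<forall>\<^sub>F x in at_left 1. (\<Sum>n<N. c n * x ^ n) \<le> f x"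
      using eventually_at_left_real[OF zero_less_one]
    proof eventually_elim
      case (elim x)
      then have "(\<lambda>n. c n * x ^ n) sums f x"
        by (rule series)
      then show ?case
        using sum_le_suminf[of "\<lambda>n. c n * x ^ n" "{..<N}"] nonneg elim by (auto simp: sums_iff)
    qed
  qed
  then have "summable c"
    by (rule summableI_nonneg_bounded[OF nonneg])
  have "s \<le> suminf c"
  proof (rule tendsto_le[OF trivial_limit_at_left_real tendsto_const limit])
    show "\<forall>\<^sub>F x in at_left 1. f x \<le> suminf c"
      using eventually_at_left_real[OF zero_less_one]
    proof eventually_elim
      case (elim x)
      then have "f x = (\<Sum>n. c n * x ^ n)"
        using series by (simp add: sums_iff)
      also have "\<dots> \<le> suminf c"
        using elim series \<open>summable c\<close> nonneg
        by (intro suminf_le) (auto simp: sums_iff mult_left_le power_le_one)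
      finally show ?case .
    qed
  qed
  moreover have "suminf c \<le> s"
    by (rule suminf_le_const[OF \<open>summable c\<close> partial])
  ultimately show ?thesis
    using \<open>summable c\<close> by (simp add: sums_iff)
qed

lemma sums_odd_indices_iff:
  fixes g :: "nat \<Rightarrow> real"
  assumes "\<And>t. even t \<Longrightarrow> g t = 0"
  shows "(\<lambda>j. g (2 * j + 1)) sums s \<longleftrightarrow> g sums s"
proof (rule sums_mono_reindex)
  show "strict_mono (\<lambda>j. 2 * j + 1 :: nat)"
    by (simp add: strict_mono_def)
  fix t :: nat
  assume "t \<notin> range (\<lambda>j. 2 * j + 1)"
  then have "even t"
    by (metis odd_two_times_div_two_succ rangeI)
  then show "g t = 0"
    by (rule assms)
qed

lemma sums_central_binom_div_odd: "(\<lambda>j. central_binom j / (2 * real j + 1)) sums (pi / 2)"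
proof -
  have "(arcsin \<longlongrightarrow> arcsin 1) (at 1 within {-1..1})"
    using continuous_on_arcsin'[unfolded continuous_on_def, rule_format, of 1] by simp
  then have "(arcsin \<longlongrightarrow> pi / 2) (at_left 1)"
    by (simp add: at_within_Icc_at_left)
  moreover have "(\<lambda>n. arcsin_coeff n * x ^ n) sums arcsin x" if "x \<in> {0<..<1}" for x
    using that by (intro sums_arcsin) auto
  ultimately have "arcsin_coeff sums (pi / 2)"
    using sums_nonneg_power_series_at_left_1[of arcsin_coeff arcsin "pi / 2"] arcsin_coeff_nonneg
    by blast
  then have "(\<lambda>j. arcsin_coeff (2 * j + 1)) sums (pi / 2)"
    by (subst sums_odd_indices_iff) (simp_all add: arcsin_coeff_def)
  then show ?thesis
    by (simp add: arcsin_coeff_def add.commute)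
qed

lemma central_binom_square_le: "(central_binom j)\<^sup>2 \<le> 1 / (2 * real j + 1)"
proof (induction j)
  case (Suc j)
  have "(2 * real j + 1) * (2 * real j + 3) \<le> (2 * real j + 2) * (2 * real j + 2)"
    by (simp add: algebra_simps)
  then have "1 / (2 * real j + 1) * ((2 * real j + 1) / (2 * real j + 2))\<^sup>2 \<le> 1 / (2 * real j + 3)"
    by (simp add: divide_simps power2_eq_square)
  moreover have "central_binom (Suc j) = central_binom j * ((2 * real j + 1) / (2 * real j + 2))"
    by (simp add: central_binom_Suc)
  then have "(central_binom (Suc j))\<^sup>2 = (central_binom j)\<^sup>2 * ((2 * real j + 1) / (2 * real j + 2))\<^sup>2"
    by (simp only: power_mult_distrib)
  ultimately show ?case
    using mult_right_mono[OF Suc, of "((2 * real j + 1) / (2 * real j + 2))\<^sup>2"]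
    by (simp add: algebra_simps)
qed simp

lemma central_binom_tendsto_0: "central_binom \<longlonglongrightarrow> 0"
proof -
  have "(\<lambda>j. (central_binom j)\<^sup>2) \<longlonglongrightarrow> 0"
  proof (rule Lim_null_comparison)
    show "\<forall>\<^sub>F j in sequentially. norm ((central_binom j)\<^sup>2) \<le> 1 / real (j + 1)"
    proof (intro always_eventually allI)
      fix j
      have "(central_binom j)\<^sup>2 \<le> 1 / (2 * real j + 1)"
        by (rule central_binom_square_le)
      also have "\<dots> \<le> 1 / real (j + 1)"
        by (simp add: frac_le)
      finally show "norm ((central_binom j)\<^sup>2) \<le> 1 / real (j + 1)"
        by simp
    qed
    show "(\<lambda>j. 1 / real (j + 1)) \<longlonglongrightarrow> 0"
      using LIMSEQ_ignore_initial_segment[OF lim_const_over_n[of 1], of 1] by simp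
  qed
  then have "(\<lambda>j. sqrt ((central_binom j)\<^sup>2)) \<longlonglongrightarrow> sqrt 0"
    by (intro tendsto_intros)
  then show ?thesis
    using central_binom_nonneg by simp
qed

text \<open>\<open>central_binom j / (j + 1)\<close> is the \<open>j\<close>-th Catalan number divided by \<open>4 ^ j\<close>.\<close>

lemma sums_central_binom_div_Suc: "(\<lambda>j. central_binom j / (real j + 1)) sums 2"
proof -
  have "(\<lambda>j. central_binom j - central_binom (Suc j)) sums (central_binom 0 - 0)"
    by (rule telescope_sums'[OF central_binom_tendsto_0])
  from sums_mult[OF this, of 2] have "(\<lambda>j. 2 * (central_binom j - central_binom (Suc j))) sums 2"
    by simp
  moreover have "2 * (central_binom j - central_binom (Suc j)) = central_binom j / (real j + 1)" for j
    by (simp add: central_binom_Suc field_simps)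
  ultimately show ?thesis
    by simp
qed

lemma sums_central_binom_Suc_weighted: "(\<lambda>j. central_binom (Suc j) * (2 / ((2 * real j + 3) * (2 * real j + 4)))) sums (pi - 3)"
proof -
  have "(\<lambda>j. 2 * (central_binom j / (2 * real j + 1)) - central_binom j / (real j + 1)) sums (2 * (pi / 2) - 2)"
    by (intro sums_diff sums_mult sums_central_binom_div_odd sums_central_binom_div_Suc)
  moreover have "2 * (central_binom j / (2 * real j + 1)) - central_binom j / (real j + 1)
      = central_binom j * (2 / ((2 * real j + 1) * (2 * real j + 2)))" for j
  proof -
    have "2 * real j + 1 \<noteq> 0" "real j + 1 \<noteq> 0" "2 * real j + 2 \<noteq> 0"
      by linarith+
    then show ?thesis
      by (simp add: divide_simps; simp add: algebra_simps)
  qed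
  ultimately have "(\<lambda>j. central_binom j * (2 / ((2 * real j + 1) * (2 * real j + 2)))) sums (pi - 2)"
    by simp
  then have "(\<lambda>j. central_binom (Suc j) * (2 / ((2 * real (Suc j) + 1) * (2 * real (Suc j) + 2)))) sums (pi - 2 - 1)"
    by (subst sums_Suc_iff) simp
  then show ?thesis
    by (simp add: algebra_simps)
qed

lemma sums_ln_2_weighted: "(\<lambda>j. 2 / ((2 * real j + 3) * (2 * real j + 4))) sums (2 * ln 2 - 1)"
proof -
  let ?f = "\<lambda>k. inverse (real (2 * k + 1)) - inverse (real (2 * k + 2))"
  have "(\<lambda>k. ?f (Suc k)) sums (ln 2 - ?f 0)"
    using alternating_harmonic_series_sums' by (subst sums_Suc_iff) simp
  from sums_mult[OF this, of 2] have "(\<lambda>k. 2 * ?f (Suc k)) sums (2 * ln 2 - 1)"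
    by (simp add: algebra_simps)
  moreover have "2 * ?f (Suc k) = 2 / ((2 * real k + 3) * (2 * real k + 4))" for k
    by (simp add: field_simps)
  ultimately show ?thesis
    by simp
qed

section \<open>The weights and summation by parts\<close>

definition u_tail :: "nat \<Rightarrow> real" where
  "u_tail m = 2 / ((real m + 2) * (real m + 3))"

lemma u_nonneg: "0 \<le> u n m"
  by (simp add: u_def)

lemma u_tail_nonneg: "0 \<le> u_tail m"
  by (simp add: u_tail_def)

lemma u_eq_u_tail_diff: "u n m = u_tail m - u_tail (Suc m)"
proof -
  have "real m + 2 \<noteq> 0" "real m + 3 \<noteq> 0" "real m + 4 \<noteq> 0"
    by linarith+
  then show ?thesis
    by (simp add: u_def u_tail_def divide_simps; simp add: algebra_simps)
qed

lemma u_tail_odd: "u_tail (2 * j + 1) = 2 / ((2 * real j + 3) * (2 * real j + 4))"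
  by (simp add: u_tail_def algebra_simps)

lemma sums_u_tail: "u_tail sums 1"
proof -
  have "(\<lambda>m. 2 / real (m + 2)) \<longlonglongrightarrow> 0"
    using LIMSEQ_ignore_initial_segment[OF lim_const_over_n[of 2], of 2] by simp
  from telescope_sums'[OF this]
  have "(\<lambda>m. 2 / real (m + 2) - 2 / real (Suc m + 2)) sums (2 / real (0 + 2) - 0)" .
  moreover have "2 / real (m + 2) - 2 / real (Suc m + 2) = u_tail m" for m
  proof -
    have "real m + 2 \<noteq> 0" "real m + 3 \<noteq> 0"
      by linarith+
    then show ?thesis
      by (simp add: u_tail_def divide_simps; simp add: algebra_simps)
  qed
  ultimately show ?thesis
    by simp
qed

lemma sums_by_parts_partial_sums:
  fixes a f :: "nat \<Rightarrow> real"
  assumes "(\<lambda>t. f t * a t) sums s" and "(\<lambda>M. a M * (\<Sum>t<M. f t)) \<longlonglongrightarrow> 0"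
  shows "(\<lambda>m. (a m - a (Suc m)) * (\<Sum>t\<le>m. f t)) sums s"
proof -
  have partial: "(\<Sum>m<M. (a m - a (Suc m)) * (\<Sum>t\<le>m. f t))
      = (\<Sum>t<M. f t * a t) - a M * (\<Sum>t<M. f t)" for M
  proof (induction M)
    case (Suc M)
    have "(\<Sum>t\<le>M. f t) = (\<Sum>t<Suc M. f t)"
      by (simp add: lessThan_Suc_atMost)
    then show ?case
      using Suc by (simp add: algebra_simps)
  qed simp
  have "(\<lambda>M. (\<Sum>t<M. f t * a t) - a M * (\<Sum>t<M. f t)) \<longlonglongrightarrow> s - 0"
    using assms by (intro tendsto_intros) (simp_all add: sums_def)
  then show ?thesis
    unfolding sums_def partial by simp
qed

lemma u_tail_mult_partial_sum_tendsto_0: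
  fixes f :: "nat \<Rightarrow> real"
  assumes "\<And>t. 0 \<le> f t" "\<And>t. f t \<le> 1"
  shows "(\<lambda>M. u_tail M * (\<Sum>t<M. f t)) \<longlonglongrightarrow> 0"
proof (rule Lim_null_comparison)
  show "(\<lambda>M. 2 / real (M + 3)) \<longlonglongrightarrow> 0"
    using LIMSEQ_ignore_initial_segment[OF lim_const_over_n[of 2], of 3] by simp
  have "norm (u_tail M * (\<Sum>t<M. f t)) \<le> 2 / real (M + 3)" for M
  proof -
    have "0 \<le> (\<Sum>t<M. f t)" "(\<Sum>t<M. f t) \<le> real M"
      using assms sum_mono[of "{..<M}" f "\<lambda>_. 1"] by (auto intro: sum_nonneg)
    then have "norm (u_tail M * (\<Sum>t<M. f t)) \<le> u_tail M * real M"
      using u_tail_nonneg[of M] by (simp add: mult_left_mono)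
    also have "\<dots> \<le> 2 / real (M + 3)"
    proof -
      have "real M + 2 > 0" "real M + 3 > 0"
        by linarith+
      then show ?thesis
        by (simp add: u_tail_def divide_simps)
    qed
    finally show ?thesis .
  qed
  then show "\<forall>\<^sub>F M in sequentially. norm (u_tail M * (\<Sum>t<M. f t)) \<le> 2 / real (M + 3)"
    by simp
qed

lemma sum_u_reverse:
  "(\<Sum>n\<le>m. u n m * g (m - n)) = (u_tail m - u_tail (Suc m)) * (\<Sum>t\<le>m. g t)"
proof -
  have "(\<Sum>n\<le>m. u n m * g (m - n)) = (u_tail m - u_tail (Suc m)) * (\<Sum>n\<le>m. g (m - n))"
    by (simp add: u_eq_u_tail_diff sum_distrib_left)
  also have "(\<Sum>n\<le>m. g (m - n)) = (\<Sum>t\<le>m. g t)"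
    using sum.atLeastAtMost_rev[of g 0 m] by (simp add: atLeast0AtMost)
  finally show ?thesis .
qed

lemma sums_u_weighted_loop_prob:
  "(\<lambda>m. (u_tail m - u_tail (Suc m)) * (\<Sum>t\<le>m. loop_prob t)) sums (pi - 3)"
proof (rule sums_by_parts_partial_sums)
  have "(\<lambda>j. loop_prob (2 * j + 1) * u_tail (2 * j + 1)) sums (pi - 3)"
    using sums_central_binom_Suc_weighted by (simp add: loop_prob_def u_tail_odd[simplified])
  then show "(\<lambda>t. loop_prob t * u_tail t) sums (pi - 3)"
    by (subst (asm) sums_odd_indices_iff) (simp_all add: loop_prob_def)
  show "(\<lambda>M. u_tail M * (\<Sum>t<M. loop_prob t)) \<longlonglongrightarrow> 0"
    by (rule u_tail_mult_partial_sum_tendsto_0) (simp_all add: loop_prob_def central_binom_nonneg central_binom_le_1)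
qed

lemma sums_u_weighted_odd_count:
  "(\<lambda>m. (u_tail m - u_tail (Suc m)) * (\<Sum>t\<le>m. if odd t then 1 else 0)) sums (2 * ln 2 - 1)"
proof (rule sums_by_parts_partial_sums)
  have "(\<lambda>j. (if odd (2 * j + 1) then 1 else 0) * u_tail (2 * j + 1)) sums (2 * ln 2 - 1)"
    using sums_ln_2_weighted by (simp add: u_tail_odd[simplified])
  then show "(\<lambda>t. (if odd t then 1 else 0) * u_tail t) sums (2 * ln 2 - 1)"
    by (subst (asm) sums_odd_indices_iff) simp_all
  show "(\<lambda>M. u_tail M * (\<Sum>t<M. if odd t then 1 else 0)) \<longlonglongrightarrow> 0"
    by (rule u_tail_mult_partial_sum_tendsto_0) simp_all
qed

lemma L_nonneg: "0 \<le> L n m x"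
  and L_le_1: "L n m x \<le> 1"
  by (simp_all add: L_def)

lemma has_sum_upper_triangle:
  fixes g :: "nat \<Rightarrow> nat \<Rightarrow> real"
  assumes nonneg: "\<And>n m. 0 \<le> g n m" and rows: "(\<lambda>m. \<Sum>n\<le>m. g n m) sums s"
  shows "((\<lambda>(n, m). g n m) has_sum s) {(n, m). n \<le> m}"
proof -
  let ?f = "\<lambda>(m, n). g n m"
  have row: "((\<lambda>n. ?f (m, n)) has_sum (\<Sum>n\<le>m. g n m)) {..m}" for m
    by simp
  have total: "((\<lambda>m. \<Sum>n\<le>m. g n m) has_sum s) UNIV"
    using rows nonneg by (intro sums_nonneg_imp_has_sum) (auto intro: sum_nonneg)
  have "?f summable_on (SIGMA m:UNIV. {..m})"
    using row has_sum_imp_summable[OF total] nonneg by (intro summable_on_SigmaI) auto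
  with row total have "(?f has_sum s) (SIGMA m:UNIV. {..m})"
    by (intro has_sum_SigmaI) auto
  moreover have "(\<lambda>(n, m). g n m) \<circ> (\<lambda>(m, n). (n, m)) = ?f"
    by auto
  moreover have "inj_on (\<lambda>(m :: nat, n :: nat). (n, m)) (SIGMA m:UNIV. {..m})"
    by (auto simp: inj_on_def)
  ultimately have "((\<lambda>(n, m). g n m) has_sum s) ((\<lambda>(m, n). (n, m)) ` (SIGMA m:UNIV. {..m}))"
    by (subst has_sum_reindex) simp_all
  also have "(\<lambda>(m, n). (n, m)) ` (SIGMA m:UNIV. {..m}) = {(n, m). n \<le> m}"
    by auto
  finally show ?thesis .
qed

lemma U_row_sums: "(\<lambda>m. \<Sum>n\<le>m. u n m * L n m x) sums U x"
proof -
  have nonneg: "0 \<le> u n m * L n m x" for n m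
    by (simp add: u_nonneg L_nonneg)
  have "summable (\<lambda>m. \<Sum>n\<le>m. u n m * L n m x)"
  proof (rule summable_comparison_test')
    have "(\<lambda>m. (u_tail m - u_tail (Suc m)) * (\<Sum>t\<le>m. 1)) sums 1"
      using sums_by_parts_partial_sums[of "\<lambda>_. 1" u_tail 1] sums_u_tail
        u_tail_mult_partial_sum_tendsto_0[of "\<lambda>_. 1"] by simp
    then show "summable (\<lambda>m. (u_tail m - u_tail (Suc m)) * (\<Sum>t\<le>m. 1 :: real))"
      by (simp add: sums_iff)
    fix m
    have "(\<Sum>n\<le>m. u n m * L n m x) \<le> (\<Sum>n\<le>m. u n m)"
      by (intro sum_mono) (simp add: mult_left_le u_nonneg L_le_1 L_nonneg)
    then show "norm (\<Sum>n\<le>m. u n m * L n m x) \<le> (u_tail m - u_tail (Suc m)) * (\<Sum>t\<le>m. 1)"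
      using nonneg by (simp add: sum_nonneg u_eq_u_tail_diff algebra_simps)
  qed
  then have "(\<lambda>m. \<Sum>n\<le>m. u n m * L n m x) sums (\<Sum>m. \<Sum>n\<le>m. u n m * L n m x)"
    by (rule summable_sums)
  moreover from has_sum_upper_triangle[OF nonneg this]
  have "U x = (\<Sum>m. \<Sum>n\<le>m. u n m * L n m x)"
    unfolding U_def by (simp add: infsumI)
  ultimately show ?thesis
    by simp
qed

definition U_trunc :: "nat \<Rightarrow> real \<Rightarrow> real" where
  "U_trunc M x = (\<Sum>m<M. \<Sum>n\<le>m. u n m * L n m x)"

lemma U_trunc_tendsto: "(\<lambda>M. U_trunc M x) \<longlonglongrightarrow> U x"
  using U_row_sums[of x] by (simp add: sums_def U_trunc_def)

lemma U_trunc_mono: "U_trunc M x \<le> U_trunc (Suc M) x"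
  by (simp add: U_trunc_def sum_nonneg u_nonneg L_nonneg)

lemma U_trunc_le_U: "U_trunc M x \<le> U x"
  by (rule incseq_le[OF _ U_trunc_tendsto]) (simp add: incseq_SucI U_trunc_mono)

lemma U_trunc_cong_digits:
  assumes "\<forall>i<N. digit x i = digit y i"
  shows "U_trunc N x = U_trunc N y"
  unfolding U_trunc_def L_def using assms by (intro sum.cong refl) auto

lemma has_integral_U_trunc:
  assumes "\<And>n m. n \<le> m \<Longrightarrow> (L n m has_integral q n m) S"
  shows "(U_trunc M has_integral (\<Sum>m<M. \<Sum>n\<le>m. u n m * q n m)) S"
  unfolding U_trunc_def by (intro has_integral_sum has_integral_mult_right assms) auto

theorem has_integral_U: "(U has_integral (pi - 3)) {0..1}"
proof -
  define P where "P M = (\<Sum>m<M. (u_tail m - u_tail (Suc m)) * (\<Sum>t\<le>m. loop_prob t))" for M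
  have "P \<longlonglongrightarrow> pi - 3"
    using sums_u_weighted_loop_prob unfolding sums_def P_def .
  have int: "(U_trunc M has_integral P M) {0..1}" for M
    using has_integral_U_trunc[of "\<lambda>n m. loop_prob (m - n)" "{0..1}" M] has_integral_L_01
    by (simp add: P_def sum_u_reverse)
  have "U integrable_on {0..1} \<and> (\<lambda>M. integral {0..1} (U_trunc M)) \<longlonglongrightarrow> integral {0..1} U"
  proof (rule monotone_convergence_increasing)
    show "U_trunc M integrable_on {0..1}" for M
      using int by blast
    show "U_trunc M x \<le> U_trunc (Suc M) x" for M x
      by (rule U_trunc_mono)
    show "(\<lambda>M. U_trunc M x) \<longlonglongrightarrow> U x" for x
      by (rule U_trunc_tendsto)
    show "bounded (range (\<lambda>M. integral {0..1} (U_trunc M)))"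
      using convergent_imp_bounded[OF \<open>P \<longlonglongrightarrow> pi - 3\<close>] by (simp add: integral_unique[OF int])
  qed
  moreover have "(\<lambda>M. integral {0..1} (U_trunc M)) = P"
    by (simp add: integral_unique[OF int])
  ultimately have "U integrable_on {0..1}" "integral {0..1} U = pi - 3"
    using \<open>P \<longlonglongrightarrow> pi - 3\<close> LIMSEQ_unique by auto
  then show ?thesis
    using integrable_integral by fastforce
qed

lemma U_measurable: "U \<in> borel_measurable (lebesgue_on {-1..1})"
proof (rule borel_measurable_LIMSEQ_real[OF U_trunc_tendsto])
  fix M
  have "U_trunc M integrable_on {-1..1}"
    using has_integral_U_trunc[of "\<lambda>n m. 2 * prefix_mean (Suc m) (loop n m)" "{-1..1}" M] has_integral_L
    by blast
  then show "U_trunc M \<in> borel_measurable (lebesgue_on {-1..1})"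
    by (rule integrable_imp_measurable)
qed

section \<open>The value at \<open>1/3\<close> and the essential supremum\<close>

lemma one_third_not_dyadic: "1 / 3 \<notin> dyadic_rationals"
proof
  assume "1 / 3 \<in> dyadic_rationals"
  then obtain j k where "1 / 3 = (of_int j / 2 ^ k :: real)"
    by (auto simp: dyadic_rationals_def)
  then have "real_of_int (2 ^ k) = real_of_int (3 * j)"
    by (simp add: field_simps)
  then have "(3 :: int) dvd 2 ^ k"
    by (simp only: of_int_eq_iff) simp
  then have "(3 :: int) dvd 2"
    by (rule prime_dvd_power[rotated]) simp
  then show False
    by simp
qed

lemma signed_expansion_one_third: "signed_expansion (1 / 3) (\<lambda>n. (-1) ^ n)"
proof -
  have "(\<lambda>n. 1 / 2 * (-1 / 2 :: real) ^ n) sums (1 / 2 * (1 / (1 - (-1 / 2))))"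
    by (intro sums_mult geometric_sums) simp
  moreover have "1 / 2 * (-1 / 2 :: real) ^ n = of_int ((-1) ^ n) / 2 ^ (n + 1)" for n
    by (induction n) (simp_all add: field_simps)
  moreover have "(-1 :: int) ^ n \<in> {-1, 1}" for n
    by (cases "even n") simp_all
  ultimately show ?thesis
    by (simp add: signed_expansion_def ac_simps)
qed

lemma digit_one_third: "digit (1 / 3) = (\<lambda>n. (-1) ^ n)"
  by (rule digit_eqI[OF one_third_not_dyadic signed_expansion_one_third])

lemma sum_alternating_signs:
  "n \<le> m \<Longrightarrow> (\<Sum>j=n..m. (-1 :: int) ^ j) = (if odd (m - n) then 0 else (-1) ^ n)"
proof (induction m rule: dec_induct)
  case (step k)
  have "(\<Sum>j=n..Suc k. (-1 :: int) ^ j) = (\<Sum>j=n..k. (-1) ^ j) + (-1) ^ Suc k"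
    using step.hyps(1) by (simp add: sum.cl_ivl_Suc)
  moreover have "(-1 :: int) ^ Suc k = (if even (Suc k - n) then (-1) ^ n else - ((-1) ^ n))"
    using step.hyps(1) by (auto simp: power_add[symmetric] minus_one_power_iff)
  ultimately show ?case
    using step.IH step.hyps(1) by (auto simp: Suc_diff_le)
qed simp

lemma L_one_third: "n \<le> m \<Longrightarrow> L n m (1 / 3) = (if odd (m - n) then 1 else 0)"
  by (simp add: L_def digit_one_third sum_alternating_signs)

lemma U_one_third: "U (1 / 3) = 2 * ln 2 - 1"
proof -
  have "(\<Sum>n\<le>m. u n m * L n m (1 / 3))
      = (u_tail m - u_tail (Suc m)) * (\<Sum>t\<le>m. if odd t then 1 else 0)" for m
  proof -
    have "(\<Sum>n\<le>m. u n m * L n m (1 / 3))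
        = (\<Sum>n\<le>m. u n m * (\<lambda>t. if odd t then 1 else 0) (m - n))"
      by (intro sum.cong refl) (simp add: L_one_third)
    then show ?thesis
      using sum_u_reverse[where g = "\<lambda>t. if odd t then 1 else 0"] by simp
  qed
  then have "(\<lambda>m. \<Sum>n\<le>m. u n m * L n m (1 / 3)) sums (2 * ln 2 - 1)"
    using sums_u_weighted_odd_count by simp
  then show ?thesis
    using U_row_sums sums_unique2 by blast
qed

lemma even_sum_signs_iff:
  fixes d :: "'a \<Rightarrow> int"
  assumes "finite A" "\<forall>i\<in>A. d i \<in> {-1, 1}"
  shows "even (\<Sum>i\<in>A. d i) \<longleftrightarrow> even (card A)"
  using assms by (induction A rule: finite_induct) (auto simp: even_minus)

lemma L_le_L_one_third:
  assumes "x \<in> {-1..1}" "x \<notin> dyadic_rationals" "n \<le> m"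
  shows "L n m x \<le> L n m (1 / 3)"
proof (cases "(\<Sum>j=n..m. digit x j) = 0")
  case True
  have "\<forall>i. digit x i \<in> {-1, 1}"
    using signed_expansionD[OF signed_expansion_digit[OF assms(1,2)]] by blast
  with True have "even (card {n..m})"
    using even_sum_signs_iff[of "{n..m}" "digit x"] by simp
  with assms(3) have "odd (m - n)"
    by simp
  with True show ?thesis
    using L_one_third[OF assms(3)] by (simp add: L_def[of n m x])
qed (simp add: L_def L_nonneg)

lemma U_le_U_one_third:
  assumes "x \<in> {-1..1}" "x \<notin> dyadic_rationals"
  shows "U x \<le> U (1 / 3)"
proof (rule sums_le[OF _ U_row_sums U_row_sums])
  show "(\<Sum>n\<le>m. u n m * L n m x) \<le> (\<Sum>n\<le>m. u n m * L n m (1 / 3))" for m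
    by (intro sum_mono mult_left_mono L_le_L_one_third assms) (simp_all add: u_nonneg)
qed

lemma dyadic_rationals_null_on_interval:
  "dyadic_rationals \<inter> {-1..1} \<in> null_sets (lebesgue_on {-1..1})"
proof -
  have "negligible (dyadic_rationals \<inter> {-1..1})"
    by (rule negligible_subset[OF negligible_dyadic_rationals]) auto
  then show ?thesis
    by (simp add: negligible_iff_null_sets null_sets_restrict_space)
qed

lemma esssup_U_le: "esssup (lebesgue_on {-1..1}) (\<lambda>x. ereal (U x)) \<le> ereal (U (1 / 3))"
proof (rule esssup_I)
  show "(\<lambda>x. ereal (U x)) \<in> borel_measurable (lebesgue_on {-1..1})"
    using U_measurable by (rule borel_measurable_ereal)
  show "AE x in lebesgue_on {-1..1}. ereal (U x) \<le> ereal (U (1 / 3))"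
    by (rule AE_I'[OF dyadic_rationals_null_on_interval]) (auto intro: U_le_U_one_third)
qed

lemma not_AE_digit_prefix_differs:
  assumes "\<forall>i. e i \<in> {-1, 1}"
  shows "\<not> (AE x in lebesgue_on {-1..1}. \<exists>i<N. digit x i \<noteq> e i)"
proof
  define F where "F d = (if \<forall>i<N. d i = e i then 1 else 0 :: real)" for d :: "nat \<Rightarrow> int"
  assume "AE x in lebesgue_on {-1..1}. \<exists>i<N. digit x i \<noteq> e i"
  from AE_E3[OF this] obtain Z
    where Z: "\<And>x. x \<in> space (lebesgue_on {-1..1}) - Z \<Longrightarrow> \<exists>i<N. digit x i \<noteq> e i"
      and "Z \<in> null_sets (lebesgue_on {-1..1})"
    by blast
  then have "negligible Z"
    by (simp add: negligible_iff_null_sets null_sets_restrict_space)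
  have "F (digit x) = 0" if "x \<in> {-1..1} - Z" for x
    using Z[of x] that by (simp add: F_def)
  then have "((\<lambda>x. F (digit x)) has_integral 0) {-1..1}"
    by (rule has_integral_spike[OF \<open>negligible Z\<close> _ has_integral_0])
  moreover have "prefix_determined N F"
    unfolding prefix_determined_def F_def by simp
  then have "((\<lambda>x. F (digit x)) has_integral 2 * prefix_mean N F) {-1..1}"
    by (rule has_integral_prefix_mean)
  ultimately have "prefix_mean N F = 0"
    using has_integral_unique by (metis mult_eq_0_iff zero_neq_numeral)
  moreover have "F (\<lambda>i. if i < N then e i else 1) / 2 ^ N \<le> prefix_mean N F"
    by (rule prefix_mean_ge_pattern[OF assms]) (simp add: F_def)
  moreover have "F (\<lambda>i. if i < N then e i else 1) = 1"
    by (simp add: F_def)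
  ultimately have "1 / 2 ^ N \<le> (0 :: real)"
    by simp
  moreover have "0 < 1 / (2 ^ N :: real)"
    by simp
  ultimately show False
    by linarith
qed

lemma esssup_U_ge: "ereal (U (1 / 3)) \<le> esssup (lebesgue_on {-1..1}) (\<lambda>x. ereal (U x))"
proof (rule ccontr)
  let ?M = "lebesgue_on {-1..1 :: real}"
  assume "\<not> ereal (U (1 / 3)) \<le> esssup ?M (\<lambda>x. ereal (U x))"
  then obtain c where c: "esssup ?M (\<lambda>x. ereal (U x)) < ereal c" "c < U (1 / 3)"
    using ereal_dense2 not_le by (metis ereal_less_eq(3) less_ereal.simps(1))
  obtain N where N: "c < U_trunc N (1 / 3)"
    using order_tendstoD(1)[OF U_trunc_tendsto c(2)] by (auto simp: eventually_sequentially)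
  have "AE x in ?M. \<exists>i<N. digit x i \<noteq> (-1) ^ i"
    using esssup_AE[of "\<lambda>x. ereal (U x)" ?M]
  proof eventually_elim
    case (elim x)
    show ?case
    proof (rule ccontr)
      assume "\<not> (\<exists>i<N. digit x i \<noteq> (-1) ^ i)"
      then have "U_trunc N x = U_trunc N (1 / 3)"
        by (intro U_trunc_cong_digits) (simp add: digit_one_third)
      then have "c < U x"
        using N U_trunc_le_U[of N x] by simp
      moreover have "ereal (U x) < ereal c"
        using elim c(1) by (rule le_less_trans)
      ultimately show False
        by simp
    qed
  qed
  moreover have "\<forall>i. (-1 :: int) ^ i \<in> {-1, 1}"
    by (simp add: minus_one_power_iff)
  ultimately show False
    using not_AE_digit_prefix_differs by blast
qed

theorem mainTheorem3:
  shows "(U has_integral (pi - 3)) {0..1}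
         \<and> U (1/3) = 2 * ln 2 - 1
         \<and> esssup (lebesgue_on {-1..1}) (\<lambda>x. ereal (U x)) = ereal (2 * ln 2 - 1)"
  using has_integral_U U_one_third antisym[OF esssup_U_le esssup_U_ge] by simp

end
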